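(* Let $(\beta_n),(\gamma_n)$ be sequences of positive real numbers that are non-decreasing, satisfy $\gamma_n\ge\beta_n$ and $\gamma_n-\beta_n\to\infty$. Let $t=(t_n)$ be a sequence of positive real numbers with $\liminf_{n}t_n>0$ and $T_{\beta\gamma(n)}:=\sum_{k\in[\beta_n,\gamma_n]}t_k\to\infty$. Let $0<\theta_1\le\theta_2\le1$. Suppose $\liminf_{n\to\infty}\frac{\gamma_n}{T_{\beta\gamma(n)}}>1$ and $0<\beta_n\le1$ for all $n$. Let $\hat f_k,\hat f:[a,b]\to L(\mathbb R)$ be fuzzy functions such that for every $x\in[a,b]$, $$\frac{1}{T_{\beta\gamma(n)}^{\theta_1}}\sum_{k\in[\beta_n,\gamma_n]}t_k\,d(\hat f_k(x),\hat f(x))\to0 .$$ Then for every $\varepsilon>0$ and every $x\in[a,b]$, $$\lim_{n\to\infty}\frac{1}{T_{\beta\gamma(n)}^{\theta_2}}\Big|\{k\in\mathbb N: k\le T_{\beta\gamma(n)},\ t_k\,d(\hat f_k(x),\hat f(x))\ge\varepsilon\}\Big|=0 .$$ That is, $N^{\theta_1}_{\beta\gamma}(t)\subset SP^{\theta_2}_{\beta\gamma}(t)$.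
   Context: $L(\mathbb R)$ is the set of fuzzy real numbers (normal, fuzzy convex, upper semicontinuous maps $\mathbb R\to[0,1]$ with compact support), with $\alpha$-cuts $[(\hat x)^-_\alpha,(\hat x)^+_\alpha]$ and metric $d(\hat x,\hat y)=\sup_{0\le\alpha\le1}\max\{|(\hat x)^-_\alpha-(\hat y)^-_\alpha|,|(\hat x)^+_\alpha-(\hat y)^+_\alpha|\}$. Sums $\sum_{k\in[\beta_n,\gamma_n]}$ range over positive integers $k$ in the interval. $|\cdot|$ denotes cardinality. $N^{\theta}_{\beta\gamma}(t)$ denotes absolutely weighted $\beta\gamma$-summability of order $\theta$ (the first displayed condition with $\theta$), and $SP^{\theta}_{\beta\gamma}(t)$ denotes weighted $\beta\gamma$-pointwise statistical convergence of order $\theta$ (the second displayed condition with $\theta$). *)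

theory Defs
  imports "HOL-Analysis.Analysis"
begin

text \<open>Fuzzy real numbers are represented by their membership functions real => real.\<close>

definition upper_semicont :: "(real \<Rightarrow> real) \<Rightarrow> bool" where
  "upper_semicont u \<longleftrightarrow>
     (\<forall>x. \<forall>e>0. \<exists>\<delta>>0. \<forall>y. \<bar>y - x\<bar> < \<delta> \<longrightarrow> u y < u x + e)"

definition fuzzy_real :: "(real \<Rightarrow> real) \<Rightarrow> bool" where
  "fuzzy_real u \<longleftrightarrow>
     (\<forall>x. 0 \<le> u x \<and> u x \<le> 1) \<and>
     (\<exists>x. u x = 1) \<and>
     (\<forall>x y l. 0 \<le> l \<and> l \<le> 1 \<longrightarrow> min (u x) (u y) \<le> u (l * x + (1 - l) * y)) \<and>
     upper_semicont u \<and>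
     compact (closure {x. 0 < u x})"

definition fcut :: "(real \<Rightarrow> real) \<Rightarrow> real \<Rightarrow> real set" where
  "fcut u \<alpha> = (if \<alpha> = 0 then closure {x. 0 < u x} else {x. \<alpha> \<le> u x})"

definition fcut_lo :: "(real \<Rightarrow> real) \<Rightarrow> real \<Rightarrow> real" where
  "fcut_lo u \<alpha> = Inf (fcut u \<alpha>)"

definition fcut_hi :: "(real \<Rightarrow> real) \<Rightarrow> real \<Rightarrow> real" where
  "fcut_hi u \<alpha> = Sup (fcut u \<alpha>)"

definition fuzzy_dist :: "(real \<Rightarrow> real) \<Rightarrow> (real \<Rightarrow> real) \<Rightarrow> real" where
  "fuzzy_dist u v = (SUP \<alpha>\<in>{0..1}. max \<bar>fcut_lo u \<alpha> - fcut_lo v \<alpha>\<bar> \<bar>fcut_hi u \<alpha> - fcut_hi v \<alpha>\<bar>)"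

definition bg_int :: "(nat \<Rightarrow> real) \<Rightarrow> (nat \<Rightarrow> real) \<Rightarrow> nat \<Rightarrow> nat set" where
  "bg_int \<beta> \<gamma> n = {k. 0 < k \<and> \<beta> n \<le> real k \<and> real k \<le> \<gamma> n}"

definition T_bg :: "(nat \<Rightarrow> real) \<Rightarrow> (nat \<Rightarrow> real) \<Rightarrow> (nat \<Rightarrow> real) \<Rightarrow> nat \<Rightarrow> real" where
  "T_bg \<beta> \<gamma> t n = (\<Sum>k\<in>bg_int \<beta> \<gamma> n. t k)"

end

theory Submission
  imports Defs
begin

text \<open>Since \<open>\<beta> n \<le> 1\<close> and eventually \<open>T n < \<gamma> n\<close>, every index \<open>k \<le> T n\<close> lies in
  \<open>[\<beta> n, \<gamma> n]\<close>. By Markov's inequality the number of such \<open>k\<close> with \<open>t k d(f\<^sub>k x, f x) \<ge> \<epsilon>\<close>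
  is then at most \<open>1/\<epsilon>\<close> times the weighted sum over \<open>[\<beta> n, \<gamma> n]\<close>, and as \<open>T n \<ge> 1\<close>,
  normalising by \<open>T n powr \<theta>2\<close> instead of \<open>T n powr \<theta>1\<close> only makes the quotient smaller.\<close>

lemma fcut_subset_closure_support:
  assumes "0 \<le> \<alpha>"
  shows "fcut u \<alpha> \<subseteq> closure {x. 0 < u x}"
  using assms closure_subset[of "{x. 0 < u x}"] by (auto simp: fcut_def)

lemma fcut_nonempty:
  assumes "fuzzy_real u" "\<alpha> \<le> 1"
  shows "fcut u \<alpha> \<noteq> {}"
proof -
  obtain x where "u x = 1" using assms(1) unfolding fuzzy_real_def by auto
  with assms(2) have "x \<in> fcut u \<alpha>"
    using closure_subset[of "{x. 0 < u x}"] by (auto simp: fcut_def)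
  then show ?thesis by auto
qed

lemma fuzzy_real_fcut_bounded:
  assumes "fuzzy_real u"
  obtains B where "\<And>\<alpha>. \<alpha> \<in> {0..1} \<Longrightarrow> \<bar>fcut_lo u \<alpha>\<bar> \<le> B \<and> \<bar>fcut_hi u \<alpha>\<bar> \<le> B"
proof -
  have "bounded (closure {x. 0 < u x})"
    using assms unfolding fuzzy_real_def by (auto intro: compact_imp_bounded)
  then obtain B where B: "\<And>x. x \<in> closure {x. 0 < u x} \<Longrightarrow> \<bar>x\<bar> \<le> B"
    unfolding bounded_iff by auto
  have "\<bar>fcut_lo u \<alpha>\<bar> \<le> B \<and> \<bar>fcut_hi u \<alpha>\<bar> \<le> B" if "\<alpha> \<in> {0..1}" for \<alpha>
  proof -
    have "\<And>x. x \<in> fcut u \<alpha> \<Longrightarrow> \<bar>x\<bar> \<le> B"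
      using B fcut_subset_closure_support[of \<alpha> u] that by auto
    with fcut_nonempty[OF assms, of \<alpha>] that show ?thesis
      unfolding fcut_lo_def fcut_hi_def by (auto intro: cInf_abs_ge cSup_abs_le)
  qed
  then show ?thesis using that by blast
qed

lemma fuzzy_dist_nonneg:
  assumes "fuzzy_real u" "fuzzy_real v"
  shows "0 \<le> fuzzy_dist u v"
proof -
  obtain B1 where B1: "\<And>\<alpha>. \<alpha> \<in> {0..1} \<Longrightarrow> \<bar>fcut_lo u \<alpha>\<bar> \<le> B1 \<and> \<bar>fcut_hi u \<alpha>\<bar> \<le> B1"
    using fuzzy_real_fcut_bounded[OF assms(1)] by blast
  obtain B2 where B2: "\<And>\<alpha>. \<alpha> \<in> {0..1} \<Longrightarrow> \<bar>fcut_lo v \<alpha>\<bar> \<le> B2 \<and> \<bar>fcut_hi v \<alpha>\<bar> \<le> B2"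
    using fuzzy_real_fcut_bounded[OF assms(2)] by blast
  define h where "h \<alpha> = max \<bar>fcut_lo u \<alpha> - fcut_lo v \<alpha>\<bar> \<bar>fcut_hi u \<alpha> - fcut_hi v \<alpha>\<bar>" for \<alpha>
  have "bdd_above (h ` {0..1})"
    using B1 B2 by (intro bdd_aboveI2[where M = "B1 + B2"]) (force simp: h_def)
  then have "h 0 \<le> (SUP \<alpha>\<in>{0..1}. h \<alpha>)"
    by (rule cSUP_upper[rotated]) auto
  moreover have "0 \<le> h 0" by (simp add: h_def)
  ultimately show ?thesis unfolding fuzzy_dist_def h_def by linarith
qed

lemma finite_bg_int: "finite (bg_int \<beta> \<gamma> n)"
proof (rule finite_subset)
  show "bg_int \<beta> \<gamma> n \<subseteq> {..nat \<lceil>\<gamma> n\<rceil>}"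
    by (auto simp: bg_int_def le_nat_iff, metis ceiling_mono ceiling_of_nat)
qed simp

lemma initial_segment_subset_bg_int:
  assumes "\<beta> n \<le> 1" "T < \<gamma> n"
  shows "{k::nat. 0 < k \<and> real k \<le> T \<and> P k} \<subseteq> bg_int \<beta> \<gamma> n"
  using assms by (force simp: bg_int_def)

lemma card_superlevel_mult_le_sum:
  fixes d :: "'a \<Rightarrow> real"
  assumes "finite A" "S \<subseteq> A" "\<And>k. k \<in> A \<Longrightarrow> 0 \<le> d k" "\<And>k. k \<in> S \<Longrightarrow> \<epsilon> \<le> d k"
  shows "\<epsilon> * real (card S) \<le> (\<Sum>k\<in>A. d k)"
proof -
  have "\<epsilon> * real (card S) = (\<Sum>k\<in>S. \<epsilon>)" by simp
  also have "\<dots> \<le> (\<Sum>k\<in>S. d k)" using assms(4) by (rule sum_mono)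
  also have "\<dots> \<le> (\<Sum>k\<in>A. d k)" using assms by (intro sum_mono2) auto
  finally show ?thesis .
qed

lemma eventually_less_of_Liminf_ratio_gt_1:
  fixes T \<gamma> :: "nat \<Rightarrow> real"
  assumes "filterlim T at_top sequentially"
    and "Liminf sequentially (\<lambda>n. ereal (\<gamma> n / T n)) > 1"
  shows "eventually (\<lambda>n. T n < \<gamma> n) sequentially"
proof -
  have "eventually (\<lambda>n. 0 < T n) sequentially"
    using assms(1) by (simp add: filterlim_at_top_dense)
  moreover have "eventually (\<lambda>n. ereal 1 < ereal (\<gamma> n / T n)) sequentially"
    using assms(2) by (intro less_LiminfD) (simp add: one_ereal_def)
  ultimately show ?thesis
    by eventually_elim (simp add: field_simps)
qed

lemma tendsto_zero_powr_order_mono: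
  fixes T c s :: "nat \<Rightarrow> real"
  assumes "filterlim T at_top sequentially" "\<theta>1 \<le> \<theta>2"
    and "eventually (\<lambda>n. 0 \<le> c n \<and> c n \<le> s n) sequentially"
    and "(\<lambda>n. (1 / T n powr \<theta>1) * s n) \<longlonglongrightarrow> 0"
  shows "(\<lambda>n. (1 / T n powr \<theta>2) * c n) \<longlonglongrightarrow> 0"
proof (rule tendsto_sandwich[OF _ _ tendsto_const assms(4)])
  have "eventually (\<lambda>n. 1 \<le> T n) sequentially"
    using assms(1) by (simp add: filterlim_at_top)
  with assms(3) show "eventually (\<lambda>n. (1 / T n powr \<theta>2) * c n \<le> (1 / T n powr \<theta>1) * s n) sequentially"
  proof eventually_elim
    case (elim n)
    have "T n powr \<theta>1 \<le> T n powr \<theta>2"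
      using elim assms(2) by (intro powr_mono) auto
    then have "1 / T n powr \<theta>2 \<le> 1 / T n powr \<theta>1"
      using elim by (intro divide_left_mono) auto
    with elim show ?case
      by (intro mult_mono) auto
  qed
  show "eventually (\<lambda>n. 0 \<le> (1 / T n powr \<theta>2) * c n) sequentially"
    using assms(3) by eventually_elim simp
qed

theorem theorem3p3:
  fixes \<beta> \<gamma> t :: "nat \<Rightarrow> real"
    and \<theta>1 \<theta>2 a b :: real
    and f :: "nat \<Rightarrow> real \<Rightarrow> (real \<Rightarrow> real)"
    and g :: "real \<Rightarrow> (real \<Rightarrow> real)"
  assumes beta_pos: "\<And>n. 0 < \<beta> n" and beta_mono: "mono \<beta>"
    and gamma_pos: "\<And>n. 0 < \<gamma> n" and gamma_mono: "mono \<gamma>"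
    and gamma_ge: "\<And>n. \<beta> n \<le> \<gamma> n"
    and diff_inf: "filterlim (\<lambda>n. \<gamma> n - \<beta> n) at_top sequentially"
    and t_pos: "\<And>n. 0 < t n"
    and t_liminf: "Liminf sequentially (\<lambda>n. ereal (t n)) > 0"
    and T_inf: "filterlim (T_bg \<beta> \<gamma> t) at_top sequentially"
    and theta: "0 < \<theta>1" "\<theta>1 \<le> \<theta>2" "\<theta>2 \<le> 1"
    and ratio: "Liminf sequentially (\<lambda>n. ereal (\<gamma> n / T_bg \<beta> \<gamma> t n)) > 1"
    and beta_le1: "\<And>n. \<beta> n \<le> 1"
    and f_fuzzy: "\<And>k x. x \<in> {a..b} \<Longrightarrow> fuzzy_real (f k x)"
    and g_fuzzy: "\<And>x. x \<in> {a..b} \<Longrightarrow> fuzzy_real (g x)"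
    and summ: "\<And>x. x \<in> {a..b} \<Longrightarrow>
       (\<lambda>n. (1 / T_bg \<beta> \<gamma> t n powr \<theta>1) *
             (\<Sum>k\<in>bg_int \<beta> \<gamma> n. t k * fuzzy_dist (f k x) (g x))) \<longlonglongrightarrow> 0"
  shows "\<forall>\<epsilon>>0. \<forall>x\<in>{a..b}.
    (\<lambda>n. (1 / T_bg \<beta> \<gamma> t n powr \<theta>2) *
          real (card {k::nat. 0 < k \<and> real k \<le> T_bg \<beta> \<gamma> t n \<and> \<epsilon> \<le> t k * fuzzy_dist (f k x) (g x)}))
    \<longlonglongrightarrow> 0"
proof (intro allI impI ballI)
  fix \<epsilon> :: real and x assume \<epsilon>: "\<epsilon> > 0" and x: "x \<in> {a..b}"
  define d where "d k = t k * fuzzy_dist (f k x) (g x)" for k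
  define S where "S n = {k::nat. 0 < k \<and> real k \<le> T_bg \<beta> \<gamma> t n \<and> \<epsilon> \<le> d k}" for n
  have d_nonneg: "0 \<le> d k" for k
    using fuzzy_dist_nonneg[OF f_fuzzy[OF x] g_fuzzy[OF x]] t_pos[of k] by (simp add: d_def)
  have "eventually (\<lambda>n. 0 \<le> real (card (S n)) \<and> real (card (S n)) \<le> (\<Sum>k\<in>bg_int \<beta> \<gamma> n. d k) / \<epsilon>)
      sequentially"
    using eventually_less_of_Liminf_ratio_gt_1[OF T_inf ratio]
  proof eventually_elim
    case (elim n)
    have "S n \<subseteq> bg_int \<beta> \<gamma> n"
      unfolding S_def using beta_le1 elim by (rule initial_segment_subset_bg_int)
    then have "\<epsilon> * real (card (S n)) \<le> (\<Sum>k\<in>bg_int \<beta> \<gamma> n. d k)"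
      using d_nonneg by (intro card_superlevel_mult_le_sum[OF finite_bg_int]) (auto simp: S_def)
    with \<epsilon> show ?case by (simp add: field_simps)
  qed
  moreover have "(\<lambda>n. (1 / T_bg \<beta> \<gamma> t n powr \<theta>1) * ((\<Sum>k\<in>bg_int \<beta> \<gamma> n. d k) / \<epsilon>)) \<longlonglongrightarrow> 0"
    using tendsto_divide_zero[OF summ[OF x], of \<epsilon>] by (simp add: d_def)
  ultimately have "(\<lambda>n. (1 / T_bg \<beta> \<gamma> t n powr \<theta>2) * real (card (S n))) \<longlonglongrightarrow> 0"
    by (rule tendsto_zero_powr_order_mono[OF T_inf theta(2)])
  then show "(\<lambda>n. (1 / T_bg \<beta> \<gamma> t n powr \<theta>2) *
      real (card {k::nat. 0 < k \<and> real k \<le> T_bg \<beta> \<gamma> t n \<and> \<epsilon> \<le> t k * fuzzy_dist (f k x) (g x)}))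
    \<longlonglongrightarrow> 0" unfolding S_def d_def .
qed

end
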